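(* Under the Setting and Algorithm in the context, suppose $\{\gamma_k\}$, $\{\eta_k\}$ and $s$ satisfy $$\frac{N-s+1}{2}\min_{k\in\mathcal N}\gamma_k\eta_k>D_{\mathcal X}^2+\frac12\sum_{k\in\mathcal B}\gamma_k^2L_f^2+\frac12\sum_{k\in\mathcal N}\gamma_k^2L_{g,\mathcal X}^2.$$ Then $$f(\bar x_{N,s})-f(x^* )\le\frac{2D_{\mathcal X}^2+\sum_{k\in\mathcal B}\gamma_k^2L_f^2+\sum_{k\in\mathcal N}\gamma_k^2L_{g,\mathcal X}^2}{(N-s+1)\min_{k\in\mathcal B}\gamma_k}$$ and $$G(\bar x_{N,s})\le\frac{\sum_{k\in\mathcal B}\gamma_k(\eta_k+\varepsilon_k)}{\sum_{k\in\mathcal B}\gamma_k}.$$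
   Context: Setting. $\mathcal X\subset\mathbb R^n$ is convex and compact; $f:\mathcal X\to\mathbb R$ is convex and $L_f$-Lipschitz; $\Delta\subset\mathbb R^d$ is compact; $g:\mathcal X\times\Delta\to\mathbb R$ is such that for every $\delta\in\Delta$, $x\mapsto g(x,\delta)$ is convex and $L_{g,\mathcal X}$-Lipschitz, and for every $x\in\mathcal X$, $\delta\mapsto g(x,\delta)$ is $L_{g,\Delta}$-Lipschitz. Let $G(x):=\max_{\delta\in\Delta}g(x,\delta)$ and assume the problem $\min_{x\in\mathcal X}\{f(x):G(x)\le0\}$ has an optimal solution $x^*$. Norms are Euclidean. $f'(x)$ denotes a subgradient of $f$ at $x$ and $g'(x,\delta)$ a subgradient of $g(\cdot,\delta)$ at $x$. Let $\omega_{\mathcal X}:\mathcal X\to\mathbb R$ be continuously differentiable and $1$-strongly convex; $V(x,z):=\omega_{\mathcal X}(z)-\omega_{\mathcal X}(x)-\langle\nabla\omega_{\mathcal X}(x),z-x\rangle$; prox-mapping $P_{x,\mathcal X}(y):=\arg\min_{z\in\mathcal X}\{\langle y,z\rangle+V(x,z)\}$; $D_{\mathcal X}:=\sqrt{\max_{x,z\in\mathcal X}V(x,z)}$. Algorithm (inexact CSA). Inputs: $N\ge1$, $x_1\in\mathcal X$, tolerances $\eta_k>0$, step-sizes $\gamma_k>0$. For $k=1,\dots,N$: choose some $\delta_k\in\Delta$ (an approximate maximizer of $g(x_k,\cdot)$); set $h_k=f'(x_k)$ if $g(x_k,\delta_k)\le\eta_k$ and $h_k=g'(x_k,\delta_k)$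 otherwise; set $x_{k+1}=P_{x_k,\mathcal X}(\gamma_kh_k)$. For $1\le s\le N$ let $I=\{s,\dots,N\}$, $\mathcal B:=\{k\in I: g(x_k,\delta_k)\le\eta_k\}$, $\mathcal N:=I\setminus\mathcal B$, and output $\bar x_{N,s}:=\sum_{k\in\mathcal B}\gamma_kx_k/\sum_{k\in\mathcal B}\gamma_k$. The cut-generation errors are $\varepsilon_k:=G(x_k)-g(x_k,\delta_k)\ge0$. (The minimum over an empty set is $+\infty$.) *)

theory Defs
  imports "HOL-Analysis.Analysis"
begin

definition strongly_convex_on :: "'a::real_normed_vector set \<Rightarrow> real \<Rightarrow> ('a \<Rightarrow> real) \<Rightarrow> bool" where
  "strongly_convex_on X c w \<longleftrightarrow>
     (\<forall>x\<in>X. \<forall>y\<in>X. \<forall>t::real. 0 \<le> t \<and> t \<le> 1 \<longrightarrow>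
        w ((1 - t) *\<^sub>R x + t *\<^sub>R y) \<le> (1 - t) * w x + t * w y - c / 2 * t * (1 - t) * (norm (x - y))\<^sup>2)"

definition bregman :: "('a::real_inner \<Rightarrow> real) \<Rightarrow> ('a \<Rightarrow> 'a) \<Rightarrow> 'a \<Rightarrow> 'a \<Rightarrow> real" where
  "bregman w dw x z = w z - w x - inner (dw x) (z - x)"

definition is_prox :: "'a::real_inner set \<Rightarrow> ('a \<Rightarrow> real) \<Rightarrow> ('a \<Rightarrow> 'a) \<Rightarrow> 'a \<Rightarrow> 'a \<Rightarrow> 'a \<Rightarrow> bool" where
  "is_prox X w dw x y p \<longleftrightarrow> p \<in> X \<and>
     (\<forall>z\<in>X. inner y p + bregman w dw x p \<le> inner y z + bregman w dw x z)"

definition diam2 :: "'a::real_inner set \<Rightarrow> ('a \<Rightarrow> real) \<Rightarrow> ('a \<Rightarrow> 'a) \<Rightarrow> real" where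
  "diam2 X w dw = (SUP p\<in>X \<times> X. bregman w dw (fst p) (snd p))"

definition is_subgrad :: "'a::real_inner set \<Rightarrow> ('a \<Rightarrow> real) \<Rightarrow> 'a \<Rightarrow> 'a \<Rightarrow> bool" where
  "is_subgrad X f x v \<longleftrightarrow> (\<forall>z\<in>X. f x + inner v (z - x) \<le> f z)"

definition maxG :: "('a \<Rightarrow> 'b \<Rightarrow> real) \<Rightarrow> 'b set \<Rightarrow> 'a \<Rightarrow> real" where
  "maxG g D x = (SUP d\<in>D. g x d)"

definition csaB :: "('a \<Rightarrow> 'b \<Rightarrow> real) \<Rightarrow> (nat \<Rightarrow> 'a) \<Rightarrow> (nat \<Rightarrow> 'b) \<Rightarrow> (nat \<Rightarrow> real) \<Rightarrow> nat \<Rightarrow> nat \<Rightarrow> nat set" where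
  "csaB g x d eta s N = {k \<in> {s..N}. g (x k) (d k) \<le> eta k}"

definition csaN :: "('a \<Rightarrow> 'b \<Rightarrow> real) \<Rightarrow> (nat \<Rightarrow> 'a) \<Rightarrow> (nat \<Rightarrow> 'b) \<Rightarrow> (nat \<Rightarrow> real) \<Rightarrow> nat \<Rightarrow> nat \<Rightarrow> nat set" where
  "csaN g x d eta s N = {k \<in> {s..N}. \<not> g (x k) (d k) \<le> eta k}"

definition csa_out :: "(nat \<Rightarrow> real) \<Rightarrow> (nat \<Rightarrow> 'a::real_vector) \<Rightarrow> nat set \<Rightarrow> 'a" where
  "csa_out gam x B = (1 / (\<Sum>k\<in>B. gam k)) *\<^sub>R (\<Sum>k\<in>B. gam k *\<^sub>R x k)"

end

theory Submission
  imports Defs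
begin

text \<open>
  Every step is a mirror-descent step for a linear function, so the three-point inequality of
  the prox-mapping, summed over the window and telescoped, bounds
  \<open>\<Sum>\<^sub>k \<langle>\<gamma>\<^sub>k h\<^sub>k, x\<^sub>k - x\<^sup>*\<rangle>\<close> by \<open>D\<^sup>2 + \<Sum>\<^sub>k \<gamma>\<^sub>k\<^sup>2 \<parallel>h\<^sub>k\<parallel>\<^sup>2 / 2\<close>. On an objective step this
  inner product dominates \<open>\<gamma>\<^sub>k (f(x\<^sub>k) - f(x\<^sup>*))\<close>; on a constraint step the cut is violated by more
  than \<open>\<eta>\<^sub>k\<close> while \<open>g(x\<^sup>*, \<delta>\<^sub>k) \<le> 0\<close>, so it dominates \<open>\<gamma>\<^sub>k \<eta>\<^sub>k\<close>. The hypothesis on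
  \<open>min\<^sub>k\<^sub>\<in>\<^sub>\<N> \<gamma>\<^sub>k \<eta>\<^sub>k\<close> then forces fewer than half of the steps to be constraint steps (unless
  the objective gap is already non-positive), so \<open>\<Sum>\<^sub>k\<^sub>\<in>\<^sub>\<B> \<gamma>\<^sub>k \<ge> (N - s + 1) min\<^sub>\<B> \<gamma> / 2\<close>, and
  Jensen's inequality for the weighted average gives both bounds.
\<close>

section \<open>Bregman distances and the prox-mapping\<close>

lemma tendsto_difference_quotient_segment:
  fixes w :: "'a::real_inner \<Rightarrow> real"
  assumes "convex X" and p: "p \<in> X" and z: "z \<in> X"
    and der: "(w has_derivative (\<lambda>h. inner (dw p) h)) (at p within X)"
  shows "((\<lambda>t. (w (p + t *\<^sub>R (z - p)) - w p) / t) \<longlongrightarrow> inner (dw p) (z - p)) (at_right 0)"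
proof -
  let ?l = "\<lambda>t::real. p + t *\<^sub>R (z - p)"
  have l: "(?l has_derivative (\<lambda>t. t *\<^sub>R (z - p))) (at 0 within {0..1})"
    by (auto intro!: derivative_eq_intros)
  have "?l ` {0..1} \<subseteq> X"
  proof
    fix y assume "y \<in> ?l ` {0..1}"
    then obtain t where t: "0 \<le> t" "t \<le> 1" "y = (1 - t) *\<^sub>R p + t *\<^sub>R z"
      by (auto simp: algebra_simps)
    then show "y \<in> X" using \<open>convex X\<close> p z unfolding convex_alt by blast
  qed
  then have "(w has_derivative (\<lambda>h. inner (dw p) h)) (at (?l 0) within ?l ` {0..1})"
    using has_derivative_subset[OF der] by simp
  from diff_chain_within[OF l this]
  have "((w \<circ> ?l) has_field_derivative inner (dw p) (z - p)) (at 0 within {0..1})"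
    unfolding has_field_derivative_def by (simp add: o_def mult.commute[of _ "inner (dw p) (z - p)"])
  then have "((\<lambda>t. ((w \<circ> ?l) t - (w \<circ> ?l) 0) / (t - 0)) \<longlongrightarrow> inner (dw p) (z - p))
      (at 0 within {0..1})"
    by (simp only: has_field_derivative_iff)
  then show ?thesis using at_within_Icc_at_right[of 0 "1::real"] by (simp add: o_def)
qed

lemma bregman_ge_half_norm_sq:
  fixes w :: "'a::real_inner \<Rightarrow> real"
  assumes "convex X" and p: "p \<in> X" and z: "z \<in> X"
    and der: "(w has_derivative (\<lambda>h. inner (dw p) h)) (at p within X)"
    and sc: "strongly_convex_on X 1 w"
  shows "(norm (z - p))\<^sup>2 / 2 \<le> bregman w dw p z"
proof -
  have bound: "((\<lambda>t. w z - w p - (1 - t) / 2 * (norm (z - p))\<^sup>2)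
      \<longlongrightarrow> w z - w p - (1 - 0) / 2 * (norm (z - p))\<^sup>2) (at_right (0::real))"
    by (intro tendsto_intros) simp
  have "\<forall>\<^sub>F t in at_right (0::real). t \<in> {0<..<1}"
    by (rule eventually_at_right_real) simp
  then have "\<forall>\<^sub>F t in at_right 0.
      (w (p + t *\<^sub>R (z - p)) - w p) / t \<le> w z - w p - (1 - t) / 2 * (norm (z - p))\<^sup>2"
  proof eventually_elim
    case (elim t)
    have "w ((1 - t) *\<^sub>R p + t *\<^sub>R z) \<le> (1 - t) * w p + t * w z - 1 / 2 * t * (1 - t) * (norm (p - z))\<^sup>2"
      using sc p z elim unfolding strongly_convex_on_def by auto
    then have "w (p + t *\<^sub>R (z - p)) - w p \<le> t * (w z - w p - (1 - t) / 2 * (norm (z - p))\<^sup>2)"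
      by (simp add: algebra_simps norm_minus_commute)
    then show ?case using elim by (simp add: divide_simps mult.commute)
  qed
  from tendsto_le[OF _ bound tendsto_difference_quotient_segment[where w=w and dw=dw, OF assms(1-4)] this]
  show ?thesis unfolding bregman_def by simp
qed

lemma bregman_nonneg:
  fixes w :: "'a::real_inner \<Rightarrow> real"
  assumes "convex X" and "p \<in> X" and "z \<in> X"
    and "(w has_derivative (\<lambda>h. inner (dw p) h)) (at p within X)"
    and "strongly_convex_on X 1 w"
  shows "0 \<le> bregman w dw p z"
  using bregman_ge_half_norm_sq[where w=w and dw=dw, OF assms] zero_le_power2[of "norm (z - p)"]
  by linarith

lemma is_prox_variational_inequality:
  fixes w :: "'a::real_inner \<Rightarrow> real"
  assumes "convex X" and prox: "is_prox X w dw x y p" and z: "z \<in> X"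
    and der: "(w has_derivative (\<lambda>h. inner (dw p) h)) (at p within X)"
  shows "0 \<le> inner (y + dw p - dw x) (z - p)"
proof -
  have p: "p \<in> X" and min: "\<forall>z\<in>X. inner y p + bregman w dw x p \<le> inner y z + bregman w dw x z"
    using prox unfolding is_prox_def by auto
  have lim: "((\<lambda>t. inner (y - dw x) (z - p) + (w (p + t *\<^sub>R (z - p)) - w p) / t)
      \<longlongrightarrow> inner (y - dw x) (z - p) + inner (dw p) (z - p)) (at_right 0)"
    by (intro tendsto_intros tendsto_difference_quotient_segment[where w=w and dw=dw, OF \<open>convex X\<close> p z der])
  have "\<forall>\<^sub>F t in at_right (0::real). t \<in> {0<..<1}"
    by (rule eventually_at_right_real) simp
  then have "\<forall>\<^sub>F t in at_right 0. 0 \<le> inner (y - dw x) (z - p) + (w (p + t *\<^sub>R (z - p)) - w p) / t"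
  proof eventually_elim
    case (elim t)
    have "(1 - t) *\<^sub>R p + t *\<^sub>R z \<in> X"
      using \<open>convex X\<close> p z elim unfolding convex_alt by auto
    then have "p + t *\<^sub>R (z - p) \<in> X" by (simp add: algebra_simps)
    with min have "0 \<le> t * inner (y - dw x) (z - p) + (w (p + t *\<^sub>R (z - p)) - w p)"
      unfolding bregman_def by (fastforce simp: inner_simps algebra_simps)
    then show ?case using elim by (simp add: field_simps)
  qed
  from tendsto_lowerbound[OF lim this] show ?thesis by (simp add: inner_simps)
qed

lemma is_prox_three_point_inequality:
  fixes w :: "'a::real_inner \<Rightarrow> real"
  assumes "convex X" and x: "x \<in> X" and prox: "is_prox X w dw x y p" and z: "z \<in> X"
    and der_x: "(w has_derivative (\<lambda>h. inner (dw x) h)) (at x within X)"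
    and der_p: "(w has_derivative (\<lambda>h. inner (dw p) h)) (at p within X)"
    and sc: "strongly_convex_on X 1 w"
  shows "inner y (x - z) \<le> bregman w dw x z - bregman w dw p z + (norm y)\<^sup>2 / 2"
proof -
  have p: "p \<in> X" using prox unfolding is_prox_def by auto
  have vi: "0 \<le> inner (y + dw p - dw x) (z - p)"
    by (rule is_prox_variational_inequality[where w=w and dw=dw, OF \<open>convex X\<close> prox z der_p])
  have three_point:
    "bregman w dw x z - bregman w dw x p - bregman w dw p z = inner (dw p - dw x) (z - p)"
    unfolding bregman_def by (simp add: inner_simps algebra_simps)
  have "(norm (x - p))\<^sup>2 / 2 \<le> bregman w dw x p"
    using bregman_ge_half_norm_sq[where w=w and dw=dw, OF \<open>convex X\<close> x p der_x sc]
    by (simp add: norm_minus_commute)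
  moreover have "inner y (x - p) \<le> (norm y)\<^sup>2 / 2 + (norm (x - p))\<^sup>2 / 2"
    using norm_cauchy_schwarz[of y "x - p"] sum_squares_bound[of "norm y" "norm (x - p)"] by simp
  ultimately show ?thesis
    using vi three_point by (simp add: inner_simps)
qed

lemma mirror_descent_sum_bound:
  fixes w :: "'a::real_inner \<Rightarrow> real"
  assumes "convex X" and z: "z \<in> X" and "s \<le> N"
    and der: "\<forall>u\<in>X. (w has_derivative (\<lambda>h. inner (dw u) h)) (at u within X)"
    and sc: "strongly_convex_on X 1 w"
    and x_in: "\<forall>k\<in>{s..N}. x k \<in> X"
    and prox: "\<forall>k\<in>{s..N}. is_prox X w dw (x k) (y k) (x (Suc k))"
  shows "(\<Sum>k=s..N. inner (y k) (x k - z)) \<le> bregman w dw (x s) z + (\<Sum>k=s..N. (norm (y k))\<^sup>2 / 2)"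
proof -
  define V where "V k = bregman w dw (x k) z" for k
  have x_Suc: "x (Suc k) \<in> X" if "k \<in> {s..N}" for k
    using prox that unfolding is_prox_def by auto
  have "(\<Sum>k=s..N. inner (y k) (x k - z)) \<le> (\<Sum>k=s..N. V k - V (Suc k) + (norm (y k))\<^sup>2 / 2)"
    unfolding V_def
    using is_prox_three_point_inequality[OF \<open>convex X\<close> _ _ z _ _ sc] x_in prox der x_Suc
    by (intro sum_mono) auto
  also have "\<dots> = V s - V (Suc N) + (\<Sum>k=s..N. (norm (y k))\<^sup>2 / 2)"
    using sum_Suc_diff[of s N V] \<open>s \<le> N\<close> by (simp add: sum.distrib sum_subtractf)
  also have "\<dots> \<le> V s + (\<Sum>k=s..N. (norm (y k))\<^sup>2 / 2)"
    using bregman_nonneg[where w=w and dw=dw, OF \<open>convex X\<close> x_Suc[of N] z _ sc] der x_Suc \<open>s \<le> N\<close>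
    unfolding V_def by auto
  finally show ?thesis unfolding V_def .
qed

lemma bregman_le_diam2:
  fixes w :: "'a::real_inner \<Rightarrow> real"
  assumes "compact X" and der: "\<forall>u\<in>X. (w has_derivative (\<lambda>h. inner (dw u) h)) (at u within X)"
    and "continuous_on X dw" and "p \<in> X" and "z \<in> X"
  shows "bregman w dw p z \<le> diam2 X w dw"
proof -
  have "continuous_on X w"
    using der has_derivative_continuous continuous_on_eq_continuous_within by blast
  then have "continuous_on (X \<times> X) (\<lambda>q. bregman w dw (fst q) (snd q))"
    unfolding bregman_def
    by (intro continuous_intros continuous_on_compose2[OF \<open>continuous_on X w\<close>]
        continuous_on_compose2[OF \<open>continuous_on X dw\<close>]) auto
  then have "bdd_above ((\<lambda>q. bregman w dw (fst q) (snd q)) ` (X \<times> X))"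
    using compact_Times[OF \<open>compact X\<close> \<open>compact X\<close>]
    by (intro bounded_imp_bdd_above compact_imp_bounded compact_continuous_image)
  from cSUP_upper[OF _ this, of "(p, z)"] show ?thesis
    unfolding diam2_def using \<open>p \<in> X\<close> \<open>z \<in> X\<close> by auto
qed

lemma csa_out_convex_combination:
  assumes "finite B" and "B \<noteq> {}" and "\<forall>k\<in>B. gam k > 0"
  shows "csa_out gam x B = (\<Sum>k\<in>B. (gam k / sum gam B) *\<^sub>R x k)"
    and "(\<Sum>k\<in>B. gam k / sum gam B) = 1"
proof -
  have "sum gam B > 0" using assms by (simp add: sum_pos)
  then show "(\<Sum>k\<in>B. gam k / sum gam B) = 1" by (simp add: sum_divide_distrib[symmetric])
  show "csa_out gam x B = (\<Sum>k\<in>B. (gam k / sum gam B) *\<^sub>R x k)"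
    unfolding csa_out_def by (simp add: scaleR_sum_right divide_inverse mult.commute)
qed

lemma convex_on_csa_out_le:
  assumes "convex_on X F" and "finite B" and "B \<noteq> {}" and "\<forall>k\<in>B. gam k > 0"
    and "\<forall>k\<in>B. x k \<in> X"
  shows "F (csa_out gam x B) \<le> (\<Sum>k\<in>B. gam k * F (x k)) / sum gam B"
proof -
  have "sum gam B > 0" using assms by (simp add: sum_pos)
  then have "F (csa_out gam x B) \<le> (\<Sum>k\<in>B. gam k / sum gam B * F (x k))"
    unfolding csa_out_convex_combination(1)[OF assms(2-4)]
    using assms csa_out_convex_combination(2)[OF assms(2-4)]
    by (intro convex_on_sum) (auto intro: less_imp_le)
  then show ?thesis by (simp add: sum_divide_distrib)
qed

lemma le_maxG:
  fixes g :: "'a \<Rightarrow> 'b::metric_space \<Rightarrow> real"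
  assumes "compact D" and "L-lipschitz_on D (g z)" and "e \<in> D"
  shows "g z e \<le> maxG g D z"
proof -
  have "bdd_above (g z ` D)"
    using assms(1) lipschitz_on_continuous_on[OF assms(2)]
    by (intro bounded_imp_bdd_above compact_imp_bounded compact_continuous_image)
  then show ?thesis unfolding maxG_def by (rule cSUP_upper[OF \<open>e \<in> D\<close>])
qed

section \<open>Counting the constraint steps\<close>

lemma card_lt_half_if_sum_le:
  fixes c :: "'i \<Rightarrow> real"
  assumes "finite A" and pos: "\<forall>k\<in>A. c k > 0" and sum: "sum c A \<le> R" and "0 < n"
    and small: "A = {} \<or> n / 2 * (MIN k\<in>A. c k) > R"
  shows "real (card A) < n / 2"
proof (cases "A = {}")
  case False
  then have "(MIN k\<in>A. c k) \<in> c ` A" using \<open>finite A\<close> by (intro Min_in) auto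
  then have "(MIN k\<in>A. c k) > 0" using pos by auto
  moreover have "real (card A) * (MIN k\<in>A. c k) \<le> sum c A"
    using \<open>finite A\<close> by (intro sum_bounded_below) simp
  ultimately show ?thesis using sum small False by (smt (verit) mult_right_mono)
qed (use \<open>0 < n\<close> in simp)

lemma sum_div_sum_le_if_card_gt_half:
  fixes gam :: "'i \<Rightarrow> real"
  assumes "finite B" and pos: "\<forall>k\<in>B. gam k > 0" and "0 < n" and card: "n / 2 < real (card B)"
    and "S \<le> R" and "0 \<le> R"
  shows "S / sum gam B \<le> 2 * R / (n * (MIN k\<in>B. gam k))"
proof -
  have "B \<noteq> {}" using card \<open>0 < n\<close> by auto
  then have "(MIN k\<in>B. gam k) \<in> gam ` B" using \<open>finite B\<close> by (intro Min_in) auto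
  then have m: "(MIN k\<in>B. gam k) > 0" using pos by auto
  have "n / 2 * (MIN k\<in>B. gam k) \<le> real (card B) * (MIN k\<in>B. gam k)"
    using card m by (intro mult_right_mono) auto
  also have "\<dots> \<le> sum gam B"
    using \<open>finite B\<close> by (intro sum_bounded_below) simp
  finally have lower: "n / 2 * (MIN k\<in>B. gam k) \<le> sum gam B" .
  have "sum gam B > 0" using \<open>B \<noteq> {}\<close> \<open>finite B\<close> pos by (simp add: sum_pos)
  have "S / sum gam B \<le> R / sum gam B"
    using \<open>sum gam B > 0\<close> \<open>S \<le> R\<close> by (intro divide_right_mono) auto
  also have "\<dots> \<le> R / (n / 2 * (MIN k\<in>B. gam k))"
    using lower m \<open>0 < n\<close> \<open>0 \<le> R\<close> \<open>sum gam B > 0\<close>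
    by (intro divide_left_mono mult_pos_pos) simp_all
  finally show ?thesis by (simp add: field_simps)
qed

section \<open>Runs of the CSA method\<close>

locale csa_run =
  fixes X :: "'a::real_inner set" and D :: "'b::metric_space set"
    and f :: "'a \<Rightarrow> real" and g :: "'a \<Rightarrow> 'b \<Rightarrow> real"
    and Lf LgX LgD :: real and xopt :: 'a
    and w :: "'a \<Rightarrow> real" and dw :: "'a \<Rightarrow> 'a"
    and N s :: nat and x :: "nat \<Rightarrow> 'a" and d :: "nat \<Rightarrow> 'b"
    and eta gam :: "nat \<Rightarrow> real" and fsub gsub :: "nat \<Rightarrow> 'a"
  assumes X_convex: "convex X" and X_compact: "compact X"
    and f_convex: "convex_on X f" and D_compact: "compact D"
    and g_convex: "\<forall>e\<in>D. convex_on X (\<lambda>z. g z e)"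
    and g_lipD: "\<forall>z\<in>X. LgD-lipschitz_on D (\<lambda>e. g z e)"
    and xopt_in: "xopt \<in> X" and xopt_feasible: "maxG g D xopt \<le> 0"
    and w_deriv: "\<forall>z\<in>X. (w has_derivative (\<lambda>h. inner (dw z) h)) (at z within X)"
    and w_C1: "continuous_on X dw"
    and w_sc: "strongly_convex_on X 1 w"
    and s_ge_1: "1 \<le> s" and s_le_N: "s \<le> N"
    and x1: "x 1 \<in> X"
    and eta_pos: "\<forall>k\<in>{1..N}. eta k > 0"
    and gam_pos: "\<forall>k\<in>{1..N}. gam k > 0"
    and d_in: "\<forall>k\<in>{1..N}. d k \<in> D"
    and fsub: "\<forall>k\<in>{1..N}. is_subgrad X f (x k) (fsub k) \<and> norm (fsub k) \<le> Lf"
    and gsub: "\<forall>k\<in>{1..N}. is_subgrad X (\<lambda>z. g z (d k)) (x k) (gsub k) \<and> norm (gsub k) \<le> LgX"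
    and step: "\<forall>k\<in>{1..N}. is_prox X w dw (x k)
                 (gam k *\<^sub>R (if g (x k) (d k) \<le> eta k then fsub k else gsub k)) (x (Suc k))"
begin

abbreviation Bs :: "nat set" where "Bs \<equiv> csaB g x d eta s N"
abbreviation Ns :: "nat set" where "Ns \<equiv> csaN g x d eta s N"

definition step_vec :: "nat \<Rightarrow> 'a" where
  "step_vec k = gam k *\<^sub>R (if g (x k) (d k) \<le> eta k then fsub k else gsub k)"

definition budget :: real where
  "budget = diam2 X w dw + 1/2 * (\<Sum>k\<in>Bs. (gam k)\<^sup>2 * Lf\<^sup>2) + 1/2 * (\<Sum>k\<in>Ns. (gam k)\<^sup>2 * LgX\<^sup>2)"

lemma iterate_in_X:
  assumes "k \<in> {1..Suc N}"
  shows "x k \<in> X"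
proof (cases "k = 1")
  case False
  then obtain j where "k = Suc j" "j \<in> {1..N}" using assms by (cases k) auto
  then show ?thesis using step unfolding is_prox_def by auto
qed (use x1 in simp)

lemma Bs_memD: "k \<in> Bs \<Longrightarrow> k \<in> {1..N} \<and> g (x k) (d k) \<le> eta k"
  using s_ge_1 unfolding csaB_def by auto

lemma Ns_memD: "k \<in> Ns \<Longrightarrow> k \<in> {1..N} \<and> \<not> g (x k) (d k) \<le> eta k"
  using s_ge_1 unfolding csaN_def by auto

lemma finite_Bs: "finite Bs" and finite_Ns: "finite Ns"
  unfolding csaB_def csaN_def by auto

lemma Bs_Un_Ns: "Bs \<union> Ns = {s..N}" and Bs_Int_Ns: "Bs \<inter> Ns = {}"
  unfolding csaB_def csaN_def by auto

lemma sum_window_split: "sum h {s..N} = sum h Bs + sum h Ns"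
  using sum.union_disjoint[OF finite_Bs finite_Ns Bs_Int_Ns, of h] by (simp add: Bs_Un_Ns)

lemma card_Bs_plus_card_Ns: "real (card Bs) + real (card Ns) = real (N - s + 1)"
  using card_Un_disjoint[OF finite_Bs finite_Ns Bs_Int_Ns] s_le_N by (simp add: Bs_Un_Ns)

lemma objective_step_progress:
  assumes "k \<in> Bs"
  shows "gam k * (f (x k) - f xopt) \<le> inner (step_vec k) (x k - xopt)"
proof -
  have k: "k \<in> {1..N}" and cut: "g (x k) (d k) \<le> eta k" using Bs_memD[OF assms] by auto
  have "f (x k) - f xopt \<le> inner (fsub k) (x k - xopt)"
    using fsub k xopt_in unfolding is_subgrad_def by (fastforce simp: inner_diff_right)
  then show ?thesis
    using gam_pos k cut unfolding step_vec_def by (simp add: mult_left_mono less_imp_le)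
qed

lemma constraint_step_progress:
  assumes "k \<in> Ns"
  shows "gam k * eta k \<le> inner (step_vec k) (x k - xopt)"
proof -
  have k: "k \<in> {1..N}" and cut: "\<not> g (x k) (d k) \<le> eta k" using Ns_memD[OF assms] by auto
  have "g (x k) (d k) + inner (gsub k) (xopt - x k) \<le> g xopt (d k)"
    using gsub k xopt_in unfolding is_subgrad_def by auto
  moreover have "g xopt (d k) \<le> maxG g D xopt"
    using le_maxG[OF D_compact, of LgD g xopt "d k"] g_lipD xopt_in d_in k by auto
  ultimately have "eta k \<le> inner (gsub k) (x k - xopt)"
    using cut xopt_feasible by (simp add: inner_diff_right)
  then show ?thesis
    using gam_pos k cut unfolding step_vec_def by (simp add: mult_left_mono less_imp_le)
qed

lemma norm_step_vec_le:
  assumes "k \<in> {1..N}"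
  shows "(norm (step_vec k))\<^sup>2 \<le> (gam k)\<^sup>2 * (if g (x k) (d k) \<le> eta k then Lf\<^sup>2 else LgX\<^sup>2)"
proof -
  have "(norm (fsub k))\<^sup>2 \<le> Lf\<^sup>2" and "(norm (gsub k))\<^sup>2 \<le> LgX\<^sup>2"
    using fsub gsub assms by (auto intro: power_mono)
  then show ?thesis
    unfolding step_vec_def by (simp add: power_mult_distrib mult_left_mono)
qed

lemma bregman_start_le_diam2: "bregman w dw (x s) xopt \<le> diam2 X w dw"
  using bregman_le_diam2[OF X_compact w_deriv w_C1] iterate_in_X s_ge_1 s_le_N xopt_in by auto

lemma budget_nonneg: "0 \<le> budget"
proof -
  have "0 \<le> bregman w dw (x s) xopt"
    using bregman_nonneg[where w=w and dw=dw, OF X_convex _ xopt_in _ w_sc] w_deriv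
      iterate_in_X s_ge_1 s_le_N by auto
  moreover have "0 \<le> (\<Sum>k\<in>Bs. (gam k)\<^sup>2 * Lf\<^sup>2)" and "0 \<le> (\<Sum>k\<in>Ns. (gam k)\<^sup>2 * LgX\<^sup>2)"
    by (simp_all add: sum_nonneg)
  ultimately show ?thesis
    using bregman_start_le_diam2 unfolding budget_def by linarith
qed

lemma progress_le_budget:
  "(\<Sum>k\<in>Bs. gam k * (f (x k) - f xopt)) + (\<Sum>k\<in>Ns. gam k * eta k) \<le> budget"
proof -
  let ?ip = "\<lambda>k. inner (step_vec k) (x k - xopt)" and ?sq = "\<lambda>k. (norm (step_vec k))\<^sup>2 / 2"
  have "(\<Sum>k\<in>Bs. gam k * (f (x k) - f xopt)) + (\<Sum>k\<in>Ns. gam k * eta k) \<le> sum ?ip Bs + sum ?ip Ns"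
    using objective_step_progress constraint_step_progress by (intro add_mono sum_mono) auto
  also have "\<dots> = sum ?ip {s..N}" by (rule sum_window_split[symmetric])
  also have "\<dots> \<le> bregman w dw (x s) xopt + sum ?sq {s..N}"
    using iterate_in_X s_ge_1 step
    by (intro mirror_descent_sum_bound[OF X_convex xopt_in s_le_N w_deriv w_sc])
      (auto simp: step_vec_def)
  also have "\<dots> = bregman w dw (x s) xopt + sum ?sq Bs + sum ?sq Ns"
    by (simp add: sum_window_split)
  also have "\<dots> \<le> budget"
  proof -
    have "sum ?sq Bs \<le> 1/2 * (\<Sum>k\<in>Bs. (gam k)\<^sup>2 * Lf\<^sup>2)"
      unfolding sum_distrib_left
    proof (rule sum_mono)
      fix k assume "k \<in> Bs"
      with norm_step_vec_le[of k] show "?sq k \<le> 1/2 * ((gam k)\<^sup>2 * Lf\<^sup>2)" by (auto dest: Bs_memD)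
    qed
    moreover have "sum ?sq Ns \<le> 1/2 * (\<Sum>k\<in>Ns. (gam k)\<^sup>2 * LgX\<^sup>2)"
      unfolding sum_distrib_left
    proof (rule sum_mono)
      fix k assume "k \<in> Ns"
      with norm_step_vec_le[of k] show "?sq k \<le> 1/2 * ((gam k)\<^sup>2 * LgX\<^sup>2)" by (auto dest: Ns_memD)
    qed
    ultimately show ?thesis using bregman_start_le_diam2 unfolding budget_def by linarith
  qed
  finally show ?thesis .
qed

lemma card_Ns_lt_half:
  assumes cond: "Ns = {} \<or> real (N - s + 1) / 2 * (MIN k\<in>Ns. gam k * eta k) > budget"
    and "(\<Sum>k\<in>Ns. gam k * eta k) \<le> budget"
  shows "real (card Ns) < real (N - s + 1) / 2"
  using card_lt_half_if_sum_le[OF finite_Ns _ assms(2) _ cond] Ns_memD gam_pos eta_pos by auto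

lemma Bs_nonempty:
  assumes cond: "Ns = {} \<or> real (N - s + 1) / 2 * (MIN k\<in>Ns. gam k * eta k) > budget"
  shows "Bs \<noteq> {}"
proof
  assume "Bs = {}"
  then have "real (card Ns) < real (N - s + 1) / 2"
    using progress_le_budget by (intro card_Ns_lt_half[OF cond]) simp
  with \<open>Bs = {}\<close> show False using card_Bs_plus_card_Ns by simp
qed

lemma objective_bound:
  assumes cond: "Ns = {} \<or> real (N - s + 1) / 2 * (MIN k\<in>Ns. gam k * eta k) > budget"
  shows "f (csa_out gam x Bs) - f xopt \<le> 2 * budget / (real (N - s + 1) * (MIN k\<in>Bs. gam k))"
proof -
  define SB where "SB = (\<Sum>k\<in>Bs. gam k * (f (x k) - f xopt))"
  have Bs_ne: "Bs \<noteq> {}" by (rule Bs_nonempty[OF cond])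
  have gam_Bs: "\<forall>k\<in>Bs. gam k > 0" and x_Bs: "\<forall>k\<in>Bs. x k \<in> X"
    using gam_pos by (auto dest!: Bs_memD intro!: iterate_in_X)
  have "sum gam Bs > 0" using finite_Bs Bs_ne gam_Bs by (simp add: sum_pos)
  have "SB = (\<Sum>k\<in>Bs. gam k * f (x k)) - sum gam Bs * f xopt"
    unfolding SB_def by (simp add: right_diff_distrib sum_subtractf sum_distrib_right)
  then have gap: "f (csa_out gam x Bs) - f xopt \<le> SB / sum gam Bs"
    using convex_on_csa_out_le[OF f_convex finite_Bs Bs_ne gam_Bs x_Bs] \<open>sum gam Bs > 0\<close>
    by (simp add: diff_divide_distrib)
  have "(MIN k\<in>Bs. gam k) \<in> gam ` Bs" using finite_Bs Bs_ne by (intro Min_in) auto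
  then have "(MIN k\<in>Bs. gam k) > 0" using gam_Bs by auto
  have SN_nonneg: "0 \<le> (\<Sum>k\<in>Ns. gam k * eta k)"
    using Ns_memD gam_pos eta_pos by (intro sum_nonneg) (simp add: less_imp_le)
  show ?thesis
  proof (cases "SB \<le> 0")
    case True
    then have "SB / sum gam Bs \<le> 0" using \<open>sum gam Bs > 0\<close> by (simp add: divide_nonpos_pos)
    moreover have "0 \<le> 2 * budget / (real (N - s + 1) * (MIN k\<in>Bs. gam k))"
      using budget_nonneg \<open>(MIN k\<in>Bs. gam k) > 0\<close> by simp
    ultimately show ?thesis using gap by linarith
  next
    case False
    then have "real (card Ns) < real (N - s + 1) / 2"
      using progress_le_budget unfolding SB_def by (intro card_Ns_lt_half[OF cond]) linarith
    then have "real (N - s + 1) / 2 < real (card Bs)" using card_Bs_plus_card_Ns by argo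
    moreover have "SB \<le> budget" using progress_le_budget SN_nonneg unfolding SB_def by linarith
    ultimately have "SB / sum gam Bs \<le> 2 * budget / (real (N - s + 1) * (MIN k\<in>Bs. gam k))"
      using budget_nonneg gam_Bs by (intro sum_div_sum_le_if_card_gt_half[OF finite_Bs]) auto
    then show ?thesis using gap by linarith
  qed
qed

lemma constraint_bound:
  assumes Bs_ne: "Bs \<noteq> {}"
  shows "maxG g D (csa_out gam x Bs)
    \<le> (\<Sum>k\<in>Bs. gam k * (eta k + (maxG g D (x k) - g (x k) (d k)))) / sum gam Bs"
proof -
  have gam_Bs: "\<forall>k\<in>Bs. gam k > 0" and x_Bs: "\<forall>k\<in>Bs. x k \<in> X"
    using gam_pos by (auto dest!: Bs_memD intro!: iterate_in_X)
  have "D \<noteq> {}" using d_in s_ge_1 s_le_N by auto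
  then show ?thesis unfolding maxG_def[of g D "csa_out gam x Bs"]
  proof (rule cSUP_least)
    fix e assume e: "e \<in> D"
    have "g (csa_out gam x Bs) e \<le> (\<Sum>k\<in>Bs. gam k * g (x k) e) / sum gam Bs"
      using convex_on_csa_out_le[OF _ finite_Bs Bs_ne gam_Bs x_Bs] g_convex e by auto
    also have "\<dots> \<le> (\<Sum>k\<in>Bs. gam k * (eta k + (maxG g D (x k) - g (x k) (d k)))) / sum gam Bs"
    proof (intro divide_right_mono sum_mono mult_left_mono)
      fix k assume k: "k \<in> Bs"
      have "g (x k) e \<le> maxG g D (x k)"
        using le_maxG[OF D_compact, of LgD g "x k" e] e g_lipD x_Bs k by auto
      then show "g (x k) e \<le> eta k + (maxG g D (x k) - g (x k) (d k))"
        using Bs_memD[OF k] by linarith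
      show "0 \<le> gam k" using gam_Bs k by auto
    qed (use gam_Bs in \<open>auto intro: sum_nonneg less_imp_le\<close>)
    finally show "g (csa_out gam x Bs) e
        \<le> (\<Sum>k\<in>Bs. gam k * (eta k + (maxG g D (x k) - g (x k) (d k)))) / sum gam Bs" .
  qed
qed

end

theorem mainTheorem17:
  fixes X :: "'a::euclidean_space set" and D :: "'b::euclidean_space set"
    and f :: "'a \<Rightarrow> real" and g :: "'a \<Rightarrow> 'b \<Rightarrow> real"
    and Lf LgX LgD :: real
    and xopt :: 'a
    and w :: "'a \<Rightarrow> real" and dw :: "'a \<Rightarrow> 'a"
    and N s :: nat and x :: "nat \<Rightarrow> 'a" and d :: "nat \<Rightarrow> 'b"
    and eta gam :: "nat \<Rightarrow> real"
    and fsub gsub :: "nat \<Rightarrow> 'a"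
  assumes X_convex: "convex X" and X_compact: "compact X"
    and f_convex: "convex_on X f" and f_lip: "Lf-lipschitz_on X f"
    and D_compact: "compact D"
    and g_convex: "\<forall>e\<in>D. convex_on X (\<lambda>z. g z e)"
    and g_lipX: "\<forall>e\<in>D. LgX-lipschitz_on X (\<lambda>z. g z e)"
    and g_lipD: "\<forall>z\<in>X. LgD-lipschitz_on D (\<lambda>e. g z e)"
    and xopt_feas: "xopt \<in> X" "maxG g D xopt \<le> 0"
    and xopt_opt: "\<forall>z\<in>X. maxG g D z \<le> 0 \<longrightarrow> f xopt \<le> f z"
    and w_deriv: "\<forall>z\<in>X. (w has_derivative (\<lambda>h. inner (dw z) h)) (at z within X)"
    and w_C1: "continuous_on X dw"
    and w_sc: "strongly_convex_on X 1 w"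
    and N_pos: "1 \<le> N" and s_range: "1 \<le> s" "s \<le> N"
    and x1: "x 1 \<in> X"
    and eta_pos: "\<forall>k\<in>{1..N}. eta k > 0"
    and gam_pos: "\<forall>k\<in>{1..N}. gam k > 0"
    and d_in: "\<forall>k\<in>{1..N}. d k \<in> D"
    and fsub: "\<forall>k\<in>{1..N}. is_subgrad X f (x k) (fsub k) \<and> norm (fsub k) \<le> Lf"
    and gsub: "\<forall>k\<in>{1..N}. is_subgrad X (\<lambda>z. g z (d k)) (x k) (gsub k) \<and> norm (gsub k) \<le> LgX"
    and step: "\<forall>k\<in>{1..N}. is_prox X w dw (x k)
                 (gam k *\<^sub>R (if g (x k) (d k) \<le> eta k then fsub k else gsub k)) (x (Suc k))"
    and cond: "csaN g x d eta s N = {} \<or>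
        real (N - s + 1) / 2 * (MIN k\<in>csaN g x d eta s N. gam k * eta k)
          > diam2 X w dw + 1/2 * (\<Sum>k\<in>csaB g x d eta s N. (gam k)\<^sup>2 * Lf\<^sup>2)
              + 1/2 * (\<Sum>k\<in>csaN g x d eta s N. (gam k)\<^sup>2 * LgX\<^sup>2)"
  shows "csaB g x d eta s N \<noteq> {} \<and>
    f (csa_out gam x (csaB g x d eta s N)) - f xopt
      \<le> (2 * diam2 X w dw + (\<Sum>k\<in>csaB g x d eta s N. (gam k)\<^sup>2 * Lf\<^sup>2)
           + (\<Sum>k\<in>csaN g x d eta s N. (gam k)\<^sup>2 * LgX\<^sup>2))
        / (real (N - s + 1) * (MIN k\<in>csaB g x d eta s N. gam k)) \<and>
    maxG g D (csa_out gam x (csaB g x d eta s N))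
      \<le> (\<Sum>k\<in>csaB g x d eta s N. gam k * (eta k + (maxG g D (x k) - g (x k) (d k))))
        / (\<Sum>k\<in>csaB g x d eta s N. gam k)"
proof -
  interpret csa_run X D f g Lf LgX LgD xopt w dw N s x d eta gam fsub gsub
    by unfold_locales (fact assms)+
  have cond_budget: "Ns = {} \<or> real (N - s + 1) / 2 * (MIN k\<in>Ns. gam k * eta k) > budget"
    using cond unfolding budget_def .
  have "2 * budget = 2 * diam2 X w dw + (\<Sum>k\<in>Bs. (gam k)\<^sup>2 * Lf\<^sup>2) + (\<Sum>k\<in>Ns. (gam k)\<^sup>2 * LgX\<^sup>2)"
    unfolding budget_def by simp
  then show ?thesis
    using Bs_nonempty[OF cond_budget] objective_bound[OF cond_budget] constraint_bound[OF Bs_nonempty[OF cond_budget]]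
    by simp
qed

end
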